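(* For an arbitrary integer $k\ge 3$ and an arbitrary integer $n$ with $\frac{k+1}{2} \leq n \leq k$, there exists a finite simple graph $G$ with an edge $e$ such that $\chi_\rho(G)=k$ and $\chi_\rho(G-e)=n$.
   Context: A $k$-packing coloring of a graph $G$ is a map $c:V(G)\to\{1,\ldots,k\}$ such that two distinct vertices $u,v$ with $c(u)=c(v)=i$ satisfy $d_G(u,v)>i$ (distance between vertices in different components is infinite). The packing chromatic number $\chi_\rho(G)$ is the smallest $k$ for which $G$ admits a $k$-packing coloring. $G-e$ denotes the graph obtained by deleting the edge $e$. *)

theory Defs
  imports Main "HOL-Library.Extended_Nat"
begin

definition finite_simple_graph :: "'a set \<Rightarrow> 'a set set \<Rightarrow> bool" where
  "finite_simple_graph V E \<longleftrightarrow> finite V \<and> (\<forall>e\<in>E. e \<subseteq> V \<and> card e = 2)"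

definition is_walk :: "'a set \<Rightarrow> 'a set set \<Rightarrow> 'a list \<Rightarrow> bool" where
  "is_walk V E xs \<longleftrightarrow> xs \<noteq> [] \<and> set xs \<subseteq> V \<and>
     (\<forall>i. Suc i < length xs \<longrightarrow> {xs ! i, xs ! Suc i} \<in> E)"

text \<open>Graph distance; infinite if there is no walk (different components).\<close>
definition gdist :: "'a set \<Rightarrow> 'a set set \<Rightarrow> 'a \<Rightarrow> 'a \<Rightarrow> enat" where
  "gdist V E u v = (INF xs \<in> {xs. is_walk V E xs \<and> hd xs = u \<and> last xs = v}.
                      enat (length xs - 1))"

definition packing_coloring :: "'a set \<Rightarrow> 'a set set \<Rightarrow> nat \<Rightarrow> ('a \<Rightarrow> nat) \<Rightarrow> bool" where
  "packing_coloring V E k c \<longleftrightarrow> (\<forall>v\<in>V. c v \<in> {1..k}) \<and>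
     (\<forall>u\<in>V. \<forall>v\<in>V. u \<noteq> v \<and> c u = c v \<longrightarrow> enat (c u) < gdist V E u v)"

definition packing_chromatic_number :: "'a set \<Rightarrow> 'a set set \<Rightarrow> nat" where
  "packing_chromatic_number V E = (LEAST k. \<exists>c. packing_coloring V E k c)"

end

theory Submission
  imports Defs
begin

text \<open>For n < k put p = n - 1, q = k - n and s = n, so that 1 \<le> q \<le> p < s, and join the
  complete split graphs consisting of a clique of size p (resp. q) completely joined to an
  independent set of size s by one edge e between the two independent sets.
  In G - e the halves lie in different components, so colouring both cliques by 2, 3, ... and
  both independent sets by 1 uses p + 1 = n colours, and the clique of size p + 1 inside the
  first half shows that this is optimal.
  In G, a clique vertex of colour 1 puts its p - 1 + s (or q - 1 + s) neighbours pairwise at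
  distance at most 2, so they need distinct colours other than 1. Otherwise an end w of e avoids
  colour 1, at most one vertex g of the second clique has colour 2, and the first clique, w and
  the second clique without g are p + q vertices that need pairwise distinct colours other
  than 1: all distances among them are at most 2, except across the two cliques, where they are
  at most 3. Hence G needs p + q + 1 = k colours, and k colours suffice.
  For n = k a clique on n vertices with a pendant edge does the job.\<close>

section \<open>Walks and graph distance\<close>

lemma successively_iff_nth:
  "successively P xs \<longleftrightarrow> (\<forall>i. Suc i < length xs \<longrightarrow> P (xs ! i) (xs ! Suc i))"
proof (induction P xs rule: successively.induct)
  case (3 P x y xs)
  then show ?case by (auto simp: All_less_Suc2 less_Suc_eq_0_disj)
qed auto

lemma is_walk_iff:
  "is_walk V E xs \<longleftrightarrow> xs \<noteq> [] \<and> set xs \<subseteq> V \<and> successively (\<lambda>a b. {a, b} \<in> E) xs"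
  unfolding is_walk_def successively_iff_nth ..

lemma gdist_le_walk:
  assumes "is_walk V E xs"
  shows "gdist V E (hd xs) (last xs) \<le> enat (length xs - 1)"
  unfolding gdist_def by (rule INF_lower) (use assms in auto)

lemma gdist_geI:
  assumes "\<And>xs. is_walk V E xs \<Longrightarrow> hd xs = u \<Longrightarrow> last xs = v \<Longrightarrow> m \<le> length xs - 1"
  shows "enat m \<le> gdist V E u v"
  unfolding gdist_def by (rule INF_greatest) (use assms in auto)

lemma gdist_attained:
  assumes "gdist V E u v \<noteq> \<infinity>"
  obtains xs where "is_walk V E xs" "hd xs = u" "last xs = v"
    "gdist V E u v = enat (length xs - 1)"
proof -
  let ?W = "{xs. is_walk V E xs \<and> hd xs = u \<and> last xs = v}"
  have "?W \<noteq> {}"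
  proof
    assume "?W = {}"
    then have "gdist V E u v = \<infinity>"
      unfolding gdist_def by (simp only: \<open>?W = {}\<close> INF_empty) (simp add: top_enat_def)
    with assms show False ..
  qed
  then have "gdist V E u v \<in> (\<lambda>xs. enat (length xs - 1)) ` ?W"
    unfolding gdist_def Inf_enat_def by (auto intro: LeastI)
  with that show thesis by blast
qed

lemma gdist_triangle: "gdist V E u w \<le> gdist V E u v + gdist V E v w"
proof (cases "gdist V E u v = \<infinity> \<or> gdist V E v w = \<infinity>")
  case False
  then obtain xs ys where
    xs: "is_walk V E xs" "hd xs = u" "last xs = v" "gdist V E u v = enat (length xs - 1)" and
    ys: "is_walk V E ys" "hd ys = v" "last ys = w" "gdist V E v w = enat (length ys - 1)"
    by (metis gdist_attained)
  obtain zs where zs: "ys = v # zs"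
    using ys(1,2) by (cases ys) (auto simp: is_walk_iff)
  have "is_walk V E (xs @ zs)"
    using xs(1,3) ys(1)
    by (auto simp: zs is_walk_iff successively_append_iff successively_Cons)
  moreover have "hd (xs @ zs) = u" "last (xs @ zs) = w"
    using xs(1-3) ys(3) by (auto simp: zs is_walk_iff)
  ultimately have "gdist V E u w \<le> enat (length (xs @ zs) - 1)"
    using gdist_le_walk by metis
  also have "\<dots> = gdist V E u v + gdist V E v w"
    using xs(1,4) ys(4) by (cases xs) (auto simp: zs is_walk_iff)
  finally show ?thesis .
qed auto

lemma gdist_commute: "gdist V E u v = gdist V E v u"
proof -
  have "gdist V E u v \<le> gdist V E v u" for u v
    unfolding gdist_def
  proof (rule INF_mono)
    fix xs assume "xs \<in> {xs. is_walk V E xs \<and> hd xs = v \<and> last xs = u}"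
    then have "rev xs \<in> {xs. is_walk V E xs \<and> hd xs = u \<and> last xs = v}"
      by (auto simp: is_walk_iff hd_rev last_rev insert_commute)
    then show "\<exists>ys\<in>{xs. is_walk V E xs \<and> hd xs = u \<and> last xs = v}.
        enat (length ys - 1) \<le> enat (length xs - 1)"
      by force
  qed
  then show ?thesis by (metis antisym)
qed

lemma gdist_le_one:
  assumes "x \<in> V" "y \<in> V" "x = y \<or> {x, y} \<in> E"
  shows "gdist V E x y \<le> 1"
proof -
  have "is_walk V E (if x = y then [x] else [x, y])"
    using assms by (auto simp: is_walk_iff)
  from gdist_le_walk[OF this] have "gdist V E x y \<le> enat (if x = y then 0 else 1)"
    by (simp split: if_splits)
  also have "\<dots> \<le> 1"
    by (simp add: one_enat_def)
  finally show ?thesis .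
qed

lemma gdist_ge_potential:
  assumes lipschitz: "\<And>a b. {a, b} \<in> E \<Longrightarrow> \<bar>f a - f b\<bar> \<le> (1::int)"
  shows "enat (nat \<bar>f u - f v\<bar>) \<le> gdist V E u v"
proof (rule gdist_geI)
  have "\<bar>f (hd xs) - f (last xs)\<bar> \<le> int (length xs - 1)"
    if "successively (\<lambda>a b. {a, b} \<in> E) xs" "xs \<noteq> []" for xs
    using that
  proof (induction xs)
    case (Cons x ys)
    show ?case
    proof (cases ys)
      case (Cons y zs)
      with Cons.prems have "{x, y} \<in> E" "successively (\<lambda>a b. {a, b} \<in> E) ys"
        by (simp_all add: successively_Cons)
      with Cons.IH lipschitz[of x y] show ?thesis
        by (auto simp: \<open>ys = y # zs\<close>)
    qed simp
  qed simp
  then show "nat \<bar>f u - f v\<bar> \<le> length xs - 1"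
    if "is_walk V E xs" "hd xs = u" "last xs = v" for xs
    using that by (force simp: is_walk_iff)
qed

lemma gdist_ge_two_if_not_adjacent:
  assumes "u \<noteq> v" "{u, v} \<notin> E"
  shows "2 \<le> gdist V E u v"
proof -
  \<comment> \<open>the distance from u, truncated at 2\<close>
  define f :: "'a \<Rightarrow> int" where "f x = (if x = u then 0 else if {u, x} \<in> E then 1 else 2)" for x
  have "\<bar>f a - f b\<bar> \<le> 1" if "{a, b} \<in> E" for a b
    using that by (auto simp: f_def insert_commute)
  from gdist_ge_potential[of E f u v, OF this] show ?thesis
    using assms by (simp add: f_def numeral_eq_enat)
qed

lemma gdist_infinite_if_separated:
  assumes "\<And>a b. {a, b} \<in> E \<Longrightarrow> a \<in> A \<longleftrightarrow> b \<in> A" "u \<in> A" "v \<notin> A"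
  shows "gdist V E u v = \<infinity>"
proof -
  have "enat M \<le> gdist V E u v" for M
    using gdist_ge_potential[of E "\<lambda>x. if x \<in> A then 0 else int M" u v] assms by fastforce
  then show ?thesis
    by (cases "gdist V E u v") (auto, metis Suc_n_not_le_n)
qed

lemma gdist_antimono_edges:
  assumes "E' \<subseteq> E"
  shows "gdist V E u v \<le> gdist V E' u v"
  unfolding gdist_def by (rule INF_superset_mono) (use assms in \<open>auto simp: is_walk_def\<close>)

section \<open>Packing colourings\<close>

lemma packing_coloring_range:
  "packing_coloring V E K c \<Longrightarrow> v \<in> V \<Longrightarrow> c v \<in> {1..K}"
  unfolding packing_coloring_def by blast

lemma packing_coloringD:
  "packing_coloring V E K c \<Longrightarrow> u \<in> V \<Longrightarrow> v \<in> V \<Longrightarrow> u \<noteq> v \<Longrightarrow> c u = c v \<Longrightarrow>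
    enat (c u) < gdist V E u v"
  unfolding packing_coloring_def by blast

lemma packing_coloring_adjacent:
  assumes "packing_coloring V E K c" "u \<in> V" "v \<in> V" "u \<noteq> v" "{u, v} \<in> E"
  shows "c u \<noteq> c v"
proof
  assume "c u = c v"
  with assms have "enat (c u) < gdist V E u v" by (intro packing_coloringD)
  also have "\<dots> \<le> 1" using assms by (intro gdist_le_one) auto
  finally show False
    using packing_coloring_range[OF assms(1,2)] by (simp add: one_enat_def)
qed

lemma packing_coloring_inj_on:
  assumes pc: "packing_coloring V E K c" and "T \<subseteq> V"
    and close: "\<And>a b. a \<in> T \<Longrightarrow> b \<in> T \<Longrightarrow> a \<noteq> b \<Longrightarrow> gdist V E a b \<le> enat (max (c a) (c b))"
  shows "inj_on c T"
proof (rule inj_onI, rule ccontr)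
  fix a b assume ab: "a \<in> T" "b \<in> T" "c a = c b" "a \<noteq> b"
  with \<open>T \<subseteq> V\<close> have "enat (c a) < gdist V E a b" by (intro packing_coloringD[OF pc]) auto
  also have "\<dots> \<le> enat (c a)" using close[OF ab(1,2,4)] ab(3) by simp
  finally show False by simp
qed

lemma card_le_if_inj_on_colors:
  assumes "packing_coloring V E K c" "T \<subseteq> V" "inj_on c T"
  shows "card T \<le> K"
proof -
  have "c ` T \<subseteq> {1..K}" using assms(2) packing_coloring_range[OF assms(1)] by blast
  have "card T = card (c ` T)" using assms(3) by (rule card_image[symmetric])
  also have "\<dots> \<le> card {1..K}" using \<open>c ` T \<subseteq> {1..K}\<close> by (intro card_mono) auto
  finally show ?thesis by simp
qed

lemma card_le_if_inj_on_colors_without_1: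
  assumes "packing_coloring V E K c" "T \<subseteq> V" "inj_on c T" "1 \<notin> c ` T"
  shows "card T \<le> K - 1"
proof -
  have "c ` T \<subseteq> {2..K}"
  proof
    fix x assume "x \<in> c ` T"
    then obtain t where "t \<in> T" "x = c t" by blast
    with assms(2) packing_coloring_range[OF assms(1)] have "x \<in> {1..K}" by blast
    with \<open>x \<in> c ` T\<close> assms(4) show "x \<in> {2..K}" by (cases "x = 1") auto
  qed
  have "card T = card (c ` T)" using assms(3) by (rule card_image[symmetric])
  also have "\<dots> \<le> card {2..K}" using \<open>c ` T \<subseteq> {2..K}\<close> by (intro card_mono) auto
  finally show ?thesis by simp
qed

lemma clique_card_le:
  assumes pc: "packing_coloring V E K c" and "T \<subseteq> V"
    and clique: "\<And>a b. a \<in> T \<Longrightarrow> b \<in> T \<Longrightarrow> a \<noteq> b \<Longrightarrow> {a, b} \<in> E"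
  shows "card T \<le> K"
proof (rule card_le_if_inj_on_colors[OF pc \<open>T \<subseteq> V\<close>], rule inj_onI, rule ccontr)
  fix a b assume "a \<in> T" "b \<in> T" "c a = c b" "a \<noteq> b"
  with \<open>T \<subseteq> V\<close> clique packing_coloring_adjacent[OF pc] show False by blast
qed

lemma card_neighbours_of_color_1_le:
  assumes pc: "packing_coloring V E K c" and "h \<in> V" "c h = 1" "T \<subseteq> V" "h \<notin> T"
    and nbr: "\<And>t. t \<in> T \<Longrightarrow> {h, t} \<in> E"
  shows "card T \<le> K - 1"
proof (rule card_le_if_inj_on_colors_without_1[OF pc \<open>T \<subseteq> V\<close>])
  have not_1: "c t \<noteq> 1" if "t \<in> T" for t
  proof -
    from that assms have "t \<in> V" "h \<noteq> t" by auto
    with packing_coloring_adjacent[OF pc \<open>h \<in> V\<close> _ _ nbr[OF that]] \<open>c h = 1\<close>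
    show ?thesis by simp
  qed
  then show "1 \<notin> c ` T" by (metis imageE)
  show "inj_on c T"
  proof (rule packing_coloring_inj_on[OF pc \<open>T \<subseteq> V\<close>])
    fix a b assume "a \<in> T" "b \<in> T"
    have "gdist V E a b \<le> gdist V E a h + gdist V E h b" by (rule gdist_triangle)
    also have "\<dots> \<le> 1 + 1"
      using assms \<open>a \<in> T\<close> \<open>b \<in> T\<close> by (intro add_mono gdist_le_one) (auto simp: insert_commute)
    also have "\<dots> \<le> enat (max (c a) (c b))"
    proof -
      have "c a \<in> {1..K}" using packing_coloring_range[OF pc] \<open>a \<in> T\<close> \<open>T \<subseteq> V\<close> by blast
      with not_1[OF \<open>a \<in> T\<close>] show ?thesis by (simp add: one_enat_def le_max_iff_disj)
    qed
    finally show "gdist V E a b \<le> enat (max (c a) (c b))" .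
  qed
qed

lemma packing_coloring_antimono_edges:
  assumes "packing_coloring V E K c" "E' \<subseteq> E"
  shows "packing_coloring V E' K c"
  using assms(1) gdist_antimono_edges[OF assms(2)] order_less_le_trans
  unfolding packing_coloring_def by meson

lemma packing_chromatic_number_eqI:
  assumes "packing_coloring V E K c" "\<And>K' c'. packing_coloring V E K' c' \<Longrightarrow> K \<le> K'"
  shows "packing_chromatic_number V E = K"
  unfolding packing_chromatic_number_def
  by (rule Least_equality) (use assms in blast)+

section \<open>Two complete split graphs joined by a bridge\<close>

text \<open>The vertices below p form a clique completely joined to the independent set
  {p..<p+s}; likewise the clique {p+s..<p+s+q} is completely joined to the independent set
  {p+s+q..<p+s+q+s}.\<close>
definition bridged_vertices :: "nat \<Rightarrow> nat \<Rightarrow> nat \<Rightarrow> nat set" where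
  "bridged_vertices p q s = {..<p+s+q+s}"

definition bridged_adj :: "nat \<Rightarrow> nat \<Rightarrow> nat \<Rightarrow> nat \<Rightarrow> nat \<Rightarrow> bool" where
  "bridged_adj p q s a b \<longleftrightarrow>
     (a < p \<and> b < p \<and> a \<noteq> b) \<or> (a < p \<and> p \<le> b \<and> b < p+s) \<or>
     (p+s \<le> a \<and> a < p+s+q \<and> p+s \<le> b \<and> b < p+s+q \<and> a \<noteq> b) \<or>
     (p+s \<le> a \<and> a < p+s+q \<and> p+s+q \<le> b \<and> b < p+s+q+s) \<or>
     (a = p \<and> b = p+s+q \<and> 0 < s)"

definition bridged_edges :: "nat \<Rightarrow> nat \<Rightarrow> nat \<Rightarrow> nat set set" where
  "bridged_edges p q s = {{a, b} | a b. bridged_adj p q s a b}"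

abbreviation bridge :: "nat \<Rightarrow> nat \<Rightarrow> nat \<Rightarrow> nat set" where
  "bridge p q s \<equiv> {p, p+s+q}"

lemma bridged_edges_iff:
  "{x, y} \<in> bridged_edges p q s \<longleftrightarrow> bridged_adj p q s x y \<or> bridged_adj p q s y x"
  unfolding bridged_edges_def by (auto simp: doubleton_eq_iff)

lemma finite_simple_graph_bridged:
  "finite_simple_graph (bridged_vertices p q s) (bridged_edges p q s)"
  unfolding finite_simple_graph_def bridged_edges_def bridged_vertices_def bridged_adj_def
  by (auto simp: card_insert_if)

lemma bridge_in_bridged_edges: "0 < s \<Longrightarrow> bridge p q s \<in> bridged_edges p q s"
  by (simp add: bridged_edges_iff bridged_adj_def)

lemma bridged_gdist_le:
  fixes p q s :: nat
  defines "V \<equiv> bridged_vertices p q s" and "E \<equiv> bridged_edges p q s"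
  assumes "1 \<le> s"
  shows bridged_gdist_left: "a \<in> insert (p+s+q) {..p} \<Longrightarrow> b \<in> insert (p+s+q) {..p} \<Longrightarrow>
      gdist V E a b \<le> 2"
    and bridged_gdist_right: "a \<in> insert p {p+s..p+s+q} \<Longrightarrow> b \<in> insert p {p+s..p+s+q} \<Longrightarrow>
      gdist V E a b \<le> 2"
    and bridged_gdist_across: "a \<in> {..p} \<Longrightarrow> b \<in> {p+s..p+s+q} \<Longrightarrow> gdist V E a b \<le> 3"
proof -
  have near_left: "gdist V E a p \<le> 1" if "a \<in> insert (p+s+q) {..p}" for a
    using that assms by (intro gdist_le_one)
      (auto simp: V_def E_def bridged_vertices_def bridged_edges_iff bridged_adj_def)
  have near_right: "gdist V E a (p+s+q) \<le> 1" if "a \<in> insert p {p+s..p+s+q}" for a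
    using that assms by (intro gdist_le_one)
      (auto simp: V_def E_def bridged_vertices_def bridged_edges_iff bridged_adj_def)
  have via: "gdist V E a b \<le> gdist V E a x + gdist V E b x" for a b x
    using gdist_triangle[of V E a b x] by (simp only: gdist_commute[of V E x b])
  show "gdist V E a b \<le> 2"
    if "a \<in> insert (p+s+q) {..p}" "b \<in> insert (p+s+q) {..p}"
  proof -
    have "gdist V E a b \<le> gdist V E a p + gdist V E b p" by (rule via)
    also have "\<dots> \<le> 1 + 1" using that by (intro add_mono near_left)
    finally show ?thesis by simp
  qed
  show "gdist V E a b \<le> 2"
    if "a \<in> insert p {p+s..p+s+q}" "b \<in> insert p {p+s..p+s+q}"
  proof -
    have "gdist V E a b \<le> gdist V E a (p+s+q) + gdist V E b (p+s+q)" by (rule via)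
    also have "\<dots> \<le> 1 + 1" using that by (intro add_mono near_right)
    finally show ?thesis by simp
  qed
  show "gdist V E a b \<le> 3" if "a \<in> {..p}" "b \<in> {p+s..p+s+q}"
  proof -
    have "gdist V E a b \<le> gdist V E a p + gdist V E b p" by (rule via)
    also have "\<dots> \<le> gdist V E a p + (gdist V E b (p+s+q) + gdist V E p (p+s+q))"
      by (intro add_left_mono via)
    also have "\<dots> \<le> 1 + (1 + 1)"
      using that by (intro add_mono near_left near_right) auto
    also have "\<dots> = 3" by (simp add: one_enat_def numeral_eq_enat)
    finally show ?thesis .
  qed
qed

definition bridged_coloring :: "nat \<Rightarrow> nat \<Rightarrow> nat \<Rightarrow> nat \<Rightarrow> nat" where
  "bridged_coloring p q s x =
     (if x < p then x + 2 else if x = p then p + q + 1 else if x < p+s then 1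
      else if x = p+s then 2 else if x < p+s+q then x + 1 - s else 1)"

lemma bridged_coloring_eq_cases:
  assumes "1 \<le> q" "q \<le> p" "1 \<le> s"
    and "u \<noteq> v" "bridged_coloring p q s u = bridged_coloring p q s v"
  shows "bridged_coloring p q s u = 1 \<and> {u, v} \<notin> bridged_edges p q s \<or> {u, v} = {0, p+s}"
proof -
  let ?c = "bridged_coloring p q s"
  have one: "?c x = 1 \<longleftrightarrow> p < x \<and> x < p+s \<or> p+s+q \<le> x" for x
    using assms(1,2) by (auto simp: bridged_coloring_def)
  have two: "?c x = 2 \<longleftrightarrow> x = 0 \<or> x = p+s" for x
    using assms(1-3) by (auto simp: bridged_coloring_def)
  have big: "x = y" if "?c x = ?c y" "3 \<le> ?c x" for x y
    using that assms(1-3) by (auto simp: bridged_coloring_def split: if_splits)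
  have "?c u \<noteq> 0" by (simp add: bridged_coloring_def)
  then consider "?c u = 1" | "?c u = 2" | "3 \<le> ?c u" by linarith
  then show ?thesis
  proof cases
    case 1
    with assms(5) have "p < u \<and> u < p+s \<or> p+s+q \<le> u" "p < v \<and> v < p+s \<or> p+s+q \<le> v"
      using one by metis+
    then have "{u, v} \<notin> bridged_edges p q s"
      unfolding bridged_edges_iff bridged_adj_def by auto
    with 1 show ?thesis by blast
  next
    case 2
    with assms(4,5) show ?thesis by (auto simp: two)
  next
    case 3
    with big assms(4,5) show ?thesis by blast
  qed
qed

lemma packing_coloring_bridged:
  assumes "1 \<le> q" "q \<le> p" "1 \<le> s"
  shows "packing_coloring (bridged_vertices p q s) (bridged_edges p q s) (p+q+1)
    (bridged_coloring p q s)"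
  unfolding packing_coloring_def
proof (intro conjI ballI impI)
  let ?c = "bridged_coloring p q s"
  fix v assume "v \<in> bridged_vertices p q s"
  then show "?c v \<in> {1..p+q+1}"
    using assms by (auto simp: bridged_vertices_def bridged_coloring_def)
next
  let ?V = "bridged_vertices p q s" and ?E = "bridged_edges p q s"
  let ?c = "bridged_coloring p q s"
  fix u v assume uv: "u \<in> ?V" "v \<in> ?V" "u \<noteq> v \<and> ?c u = ?c v"
  have "?c u = 1 \<and> {u, v} \<notin> ?E \<or> {u, v} = {0, p+s}"
    using uv(3) by (intro bridged_coloring_eq_cases[OF assms]) simp_all
  then show "enat (?c u) < gdist ?V ?E u v"
  proof
    assume non_adjacent: "?c u = 1 \<and> {u, v} \<notin> ?E"
    then have "enat (?c u) < 2" by (simp add: numeral_eq_enat)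
    also have "2 \<le> gdist ?V ?E u v"
      using non_adjacent uv by (intro gdist_ge_two_if_not_adjacent) auto
    finally show ?thesis .
  next
    assume ends: "{u, v} = {0, p+s}"
    define f :: "nat \<Rightarrow> int" where
      "f x = (if x < p then 0 else if x < p+s then 1 else if x < p+s+q then 3 else 2)" for x
    have lipschitz: "\<bar>f a - f b\<bar> \<le> 1" if "{a, b} \<in> ?E" for a b
      using that by (auto simp: f_def bridged_edges_iff bridged_adj_def)
    have "?c u = 2"
      using ends assms by (auto simp: bridged_coloring_def doubleton_eq_iff)
    then have "enat (?c u) < 3" by (simp add: numeral_eq_enat)
    also have "3 \<le> gdist ?V ?E u v"
      using gdist_ge_potential[of ?E f u v, OF lipschitz] ends assms
      by (auto simp: f_def doubleton_eq_iff numeral_eq_enat)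
    finally show ?thesis .
  qed
qed

definition bridged_minus_bridge_coloring :: "nat \<Rightarrow> nat \<Rightarrow> nat \<Rightarrow> nat \<Rightarrow> nat" where
  "bridged_minus_bridge_coloring p q s x =
     (if x < p then x + 2 else if x < p+s then 1 else if x < p+s+q then x - (p+s) + 2 else 1)"

lemma bridged_minus_bridge_separated:
  "{a, b} \<in> bridged_edges p q s - {bridge p q s} \<Longrightarrow> a < p+s \<longleftrightarrow> b < p+s"
  by (auto simp: bridged_edges_iff bridged_adj_def doubleton_eq_iff)

lemma bridged_minus_bridge_coloring_eq_cases:
  assumes "u \<noteq> v" "bridged_minus_bridge_coloring p q s u = bridged_minus_bridge_coloring p q s v"
  shows "bridged_minus_bridge_coloring p q s u = 1 \<and> {u, v} \<notin> bridged_edges p q s - {bridge p q s}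
    \<or> (u < p+s \<longleftrightarrow> \<not> v < p+s)"
proof -
  let ?c = "bridged_minus_bridge_coloring p q s"
  have one: "?c x = 1 \<longleftrightarrow> p \<le> x \<and> x < p+s \<or> p+s+q \<le> x" for x
    by (simp add: bridged_minus_bridge_coloring_def)
  show ?thesis
  proof (cases "?c u = 1")
    case True
    with assms(2) have "p \<le> u \<and> u < p+s \<or> p+s+q \<le> u" "p \<le> v \<and> v < p+s \<or> p+s+q \<le> v"
      using one by metis+
    then have "bridged_adj p q s u v \<or> bridged_adj p q s v u \<Longrightarrow> {u, v} = bridge p q s"
      unfolding bridged_adj_def by auto
    with True show ?thesis by (auto simp: bridged_edges_iff)
  next
    case False
    with assms(2) one have "u < p \<or> p+s \<le> u \<and> u < p+s+q" "v < p \<or> p+s \<le> v \<and> v < p+s+q"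
      by (metis not_le)+
    with assms show ?thesis
      by (auto simp: bridged_minus_bridge_coloring_def)
  qed
qed

lemma packing_coloring_bridged_minus_bridge:
  assumes "q \<le> p"
  shows "packing_coloring (bridged_vertices p q s) (bridged_edges p q s - {bridge p q s}) (p+1)
    (bridged_minus_bridge_coloring p q s)"
  unfolding packing_coloring_def
proof (intro conjI ballI impI)
  let ?c = "bridged_minus_bridge_coloring p q s"
  fix v assume "v \<in> bridged_vertices p q s"
  then show "?c v \<in> {1..p+1}"
    using assms by (auto simp: bridged_vertices_def bridged_minus_bridge_coloring_def)
next
  let ?V = "bridged_vertices p q s" and ?E = "bridged_edges p q s - {bridge p q s}"
  let ?c = "bridged_minus_bridge_coloring p q s"
  fix u v assume uv: "u \<in> ?V" "v \<in> ?V" "u \<noteq> v \<and> ?c u = ?c v"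
  have "?c u = 1 \<and> {u, v} \<notin> ?E \<or> (u < p+s \<longleftrightarrow> \<not> v < p+s)"
    using uv(3) by (intro bridged_minus_bridge_coloring_eq_cases) simp_all
  then show "enat (?c u) < gdist ?V ?E u v"
  proof
    assume non_adjacent: "?c u = 1 \<and> {u, v} \<notin> ?E"
    then have "enat (?c u) < 2" by (simp add: numeral_eq_enat)
    also have "2 \<le> gdist ?V ?E u v"
      using non_adjacent uv by (intro gdist_ge_two_if_not_adjacent) auto
    finally show ?thesis .
  next
    assume "u < p+s \<longleftrightarrow> \<not> v < p+s"
    then have "gdist ?V ?E u v = \<infinity>"
      using gdist_infinite_if_separated[of ?E "{..<p+s}"] bridged_minus_bridge_separated
        gdist_commute by (metis lessThan_iff)
    then show ?thesis by simp
  qed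
qed

lemma bridged_minus_bridge_colors_ge:
  assumes "packing_coloring (bridged_vertices p q s) (bridged_edges p q s - {bridge p q s}) K c"
    "1 \<le> s"
  shows "p + 1 \<le> K"
proof -
  have "card {..p} \<le> K"
  proof (rule clique_card_le[OF assms(1)])
    show "{..p} \<subseteq> bridged_vertices p q s"
      using assms(2) by (auto simp: bridged_vertices_def)
    fix a b assume "a \<in> {..p}" "b \<in> {..p}" "a \<noteq> b"
    then have "bridged_adj p q s a b \<or> bridged_adj p q s b a" "p+s+q \<notin> {a, b}"
      using assms(2) unfolding bridged_adj_def by auto
    then show "{a, b} \<in> bridged_edges p q s - {bridge p q s}"
      by (auto simp: bridged_edges_iff)
  qed
  then show ?thesis by simp
qed

lemma bridged_inj_on_colors:
  fixes p q s w :: nat and R :: "nat set"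
  defines "V \<equiv> bridged_vertices p q s" and "E \<equiv> bridged_edges p q s"
    and "T \<equiv> insert w ({..<p} \<union> R)"
  assumes pc: "packing_coloring V E K c" and s1: "1 \<le> s"
    and w: "w \<in> bridge p q s" and R: "R \<subseteq> {p+s..<p+s+q}"
    and ge_2: "\<And>x. x \<in> T \<Longrightarrow> 2 \<le> c x" and ge_3: "\<And>x. x \<in> R \<Longrightarrow> 3 \<le> c x"
  shows "inj_on c T"
proof (rule packing_coloring_inj_on[OF pc])
  show "T \<subseteq> V"
    using w R s1 by (auto simp: T_def V_def bridged_vertices_def)
  fix a b assume "a \<in> T" "b \<in> T"
  let ?L = "insert (p+s+q) {..p}" and ?R = "insert p {p+s..p+s+q}"
  have left: "x \<in> ?L" if "x \<in> T" "x \<notin> R" for x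
    using that w by (auto simp: T_def)
  have right: "x \<in> ?R" if "x \<in> T" "\<not> x < p" for x
    using that w R by (auto simp: T_def)
  have "\<not> x < p" if "x \<in> R" for x
    using that R by auto
  then have "a \<in> ?L \<and> b \<in> ?L \<or> a \<in> ?R \<and> b \<in> ?R \<or> a < p \<and> b \<in> R \<or> a \<in> R \<and> b < p"
    using left right \<open>a \<in> T\<close> \<open>b \<in> T\<close> by metis
  then show "gdist V E a b \<le> enat (max (c a) (c b))"
  proof (elim disjE conjE)
    assume "a \<in> ?L" "b \<in> ?L"
    then have "gdist V E a b \<le> 2" unfolding V_def E_def by (rule bridged_gdist_left[OF s1])
    also have "\<dots> \<le> enat (max (c a) (c b))" using ge_2[OF \<open>a \<in> T\<close>] by (simp add: numeral_eq_enat)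
    finally show ?thesis .
  next
    assume "a \<in> ?R" "b \<in> ?R"
    then have "gdist V E a b \<le> 2" unfolding V_def E_def by (rule bridged_gdist_right[OF s1])
    also have "\<dots> \<le> enat (max (c a) (c b))" using ge_2[OF \<open>a \<in> T\<close>] by (simp add: numeral_eq_enat)
    finally show ?thesis .
  next
    assume "a < p" "b \<in> R"
    then have "gdist V E a b \<le> 3" unfolding V_def E_def
      using R by (intro bridged_gdist_across[OF s1]) auto
    also have "\<dots> \<le> enat (max (c a) (c b))" using ge_3[OF \<open>b \<in> R\<close>] by (simp add: numeral_eq_enat)
    finally show ?thesis .
  next
    assume "a \<in> R" "b < p"
    then have "gdist V E a b \<le> 3" unfolding V_def E_def
      using R by (subst gdist_commute, intro bridged_gdist_across[OF s1]) auto
    also have "\<dots> \<le> enat (max (c a) (c b))" using ge_3[OF \<open>a \<in> R\<close>] by (simp add: numeral_eq_enat)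
    finally show ?thesis .
  qed
qed

lemma bridged_colors_ge_if_cliques_avoid_1:
  fixes p q s :: nat
  defines "V \<equiv> bridged_vertices p q s" and "E \<equiv> bridged_edges p q s"
  assumes pc: "packing_coloring V E K c" and q1: "1 \<le> q" and s1: "1 \<le> s"
    and H0: "\<And>h. h < p \<Longrightarrow> c h \<noteq> 1" and H2: "\<And>h. h \<in> {p+s..<p+s+q} \<Longrightarrow> c h \<noteq> 1"
  shows "p + q + 1 \<le> K"
proof -
  have in_V: "x \<in> V" if "x < p+s+q+s" for x using that by (simp add: V_def bridged_vertices_def)
  have adj_E: "{a, b} \<in> E" if "bridged_adj p q s a b" for a b
    using that by (simp add: E_def bridged_edges_iff)
  obtain w where w: "w \<in> bridge p q s" "c w \<noteq> 1"
  proof -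
    have "c p \<noteq> c (p+s+q)"
      using s1 by (intro packing_coloring_adjacent[OF pc] in_V adj_E)
        (auto simp: bridged_adj_def)
    then show thesis
      using that[of p] that[of "p+s+q"] by (cases "c p = 1") auto
  qed
  obtain g where g: "g \<in> {p+s..<p+s+q}" "\<And>x. x \<in> {p+s..<p+s+q} - {g} \<Longrightarrow> c x \<noteq> 2"
  proof (cases "\<exists>g \<in> {p+s..<p+s+q}. c g = 2")
    case True
    then obtain g where "g \<in> {p+s..<p+s+q}" "c g = 2" by blast
    moreover have "c x \<noteq> c g" if "x \<in> {p+s..<p+s+q} - {g}" for x
      using that \<open>g \<in> {p+s..<p+s+q}\<close>
      by (intro packing_coloring_adjacent[OF pc] in_V adj_E) (auto simp: bridged_adj_def)
    ultimately show thesis using that by metis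
  next
    case False
    then show thesis using that[of "p+s"] q1 by auto
  qed
  define R where "R = {p+s..<p+s+q} - {g}"
  define T where "T = insert w ({..<p} \<union> R)"
  have "T \<subseteq> V" using w(1) q1 s1 by (auto simp: T_def R_def intro: in_V)
  have ge_2: "2 \<le> c x" if "x \<in> T" for x
  proof -
    have "1 \<le> c x" using packing_coloring_range[OF pc] \<open>T \<subseteq> V\<close> that by auto
    moreover have "c x \<noteq> 1" using that w H0 H2 by (auto simp: T_def R_def)
    ultimately show ?thesis by simp
  qed
  have ge_3: "3 \<le> c x" if "x \<in> R" for x
    using ge_2[of x] g(2)[of x] that by (auto simp: T_def R_def)
  have "card T \<le> K - 1"
  proof (rule card_le_if_inj_on_colors_without_1[OF pc \<open>T \<subseteq> V\<close>])
    show "1 \<notin> c ` T" using ge_2 by fastforce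
    show "inj_on c T"
      unfolding T_def V_def E_def
      by (rule bridged_inj_on_colors[OF pc[unfolded V_def E_def] s1 w(1)])
        (use ge_2 ge_3 in \<open>auto simp: R_def T_def\<close>)
  qed
  moreover have "card T = p + q"
  proof -
    have "w \<notin> {..<p} \<union> R" using w(1) s1 by (auto simp: R_def)
    moreover have "card ({..<p} \<union> R) = p + (q - 1)"
      using g(1) by (subst card_Un_disjoint) (auto simp: R_def)
    moreover have "finite R" by (simp add: R_def)
    ultimately show ?thesis using q1 by (simp add: T_def)
  qed
  ultimately show ?thesis using q1 by linarith
qed

lemma bridged_colors_ge:
  fixes p q s :: nat
  defines "V \<equiv> bridged_vertices p q s" and "E \<equiv> bridged_edges p q s"
  assumes pc: "packing_coloring V E K c" and q1: "1 \<le> q" and "q \<le> p" "p < s"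
  shows "p + q + 1 \<le> K"
proof -
  have in_V: "x \<in> V" if "x < p+s+q+s" for x using that by (simp add: V_def bridged_vertices_def)
  consider (left) h where "h < p" "c h = 1" | (right) h where "h \<in> {p+s..<p+s+q}" "c h = 1"
    | (neither) "\<And>h. h < p \<Longrightarrow> c h \<noteq> 1" "\<And>h. h \<in> {p+s..<p+s+q} \<Longrightarrow> c h \<noteq> 1"
    by blast
  then show ?thesis
  proof cases
    case (left h)
    have "card ({..<p+s} - {h}) \<le> K - 1"
      using left by (intro card_neighbours_of_color_1_le[OF pc]) (auto simp: E_def
          bridged_edges_iff bridged_adj_def intro: in_V)
    with left \<open>q \<le> p\<close> \<open>p < s\<close> show ?thesis by simp
  next
    case (right h)
    have "card ({p+s..<p+s+q+s} - {h}) \<le> K - 1"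
      using right by (intro card_neighbours_of_color_1_le[OF pc]) (auto simp: E_def
          bridged_edges_iff bridged_adj_def intro: in_V)
    with right \<open>p < s\<close> show ?thesis by auto
  next
    case neither
    from \<open>p < s\<close> have "1 \<le> s" by simp
    from bridged_colors_ge_if_cliques_avoid_1[OF pc[unfolded V_def E_def] q1 this neither]
    show ?thesis .
  qed
qed

lemma packing_chromatic_number_bridged:
  assumes "1 \<le> q" "q \<le> p" "p < s"
  shows "packing_chromatic_number (bridged_vertices p q s) (bridged_edges p q s) = p + q + 1"
proof (rule packing_chromatic_number_eqI)
  show "packing_coloring (bridged_vertices p q s) (bridged_edges p q s) (p+q+1)
      (bridged_coloring p q s)"
    using assms by (intro packing_coloring_bridged) auto
qed (use assms bridged_colors_ge in blast)

lemma packing_chromatic_number_bridged_minus_bridge: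
  assumes "q \<le> p" "1 \<le> s"
  shows "packing_chromatic_number (bridged_vertices p q s) (bridged_edges p q s - {bridge p q s})
    = p + 1"
  by (rule packing_chromatic_number_eqI[OF packing_coloring_bridged_minus_bridge[OF assms(1)]])
    (use assms(2) bridged_minus_bridge_colors_ge in blast)

section \<open>A clique with a pendant edge\<close>

definition pendant_clique_edges :: "nat \<Rightarrow> nat set set" where
  "pendant_clique_edges n = {{a, b} | a b. a < n \<and> b < n \<and> a \<noteq> b} \<union> {{n - 1, n}}"

definition pendant_clique_coloring :: "nat \<Rightarrow> nat \<Rightarrow> nat" where
  "pendant_clique_coloring n x = (if x = n then 1 else x + 1)"

lemma finite_simple_graph_pendant_clique:
  "1 \<le> n \<Longrightarrow> finite_simple_graph {..n} (pendant_clique_edges n)"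
  unfolding finite_simple_graph_def pendant_clique_edges_def by (auto simp: card_insert_if)

lemma packing_coloring_pendant_clique:
  assumes "2 \<le> n" "E \<subseteq> pendant_clique_edges n"
  shows "packing_coloring {..n} E n (pendant_clique_coloring n)"
  unfolding packing_coloring_def
proof (intro conjI ballI impI)
  fix v assume "v \<in> {..n}"
  with assms(1) show "pendant_clique_coloring n v \<in> {1..n}"
    by (auto simp: pendant_clique_coloring_def)
next
  fix u v assume "u \<in> {..n}" "v \<in> {..n}"
    "u \<noteq> v \<and> pendant_clique_coloring n u = pendant_clique_coloring n v"
  then have ends: "{u, v} = {0, n}" and "pendant_clique_coloring n u = 1"
    by (auto simp: pendant_clique_coloring_def split: if_splits)
  then have "enat (pendant_clique_coloring n u) < 2" by (simp add: numeral_eq_enat)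
  also have "2 \<le> gdist {..n} E u v"
  proof (rule gdist_ge_two_if_not_adjacent)
    show "u \<noteq> v" using ends assms(1) by auto
    show "{u, v} \<notin> E"
      using ends assms by (auto simp: pendant_clique_edges_def doubleton_eq_iff)
  qed
  finally show "enat (pendant_clique_coloring n u) < gdist {..n} E u v" .
qed

lemma pendant_clique_colors_ge:
  assumes "packing_coloring {..n} (pendant_clique_edges n - {{n - 1, n}}) K c"
  shows "n \<le> K"
proof -
  have "card {..<n} \<le> K"
    by (rule clique_card_le[OF assms]) (auto simp: pendant_clique_edges_def doubleton_eq_iff)
  then show ?thesis by simp
qed

lemma packing_chromatic_number_pendant_clique:
  assumes "2 \<le> n"
  shows "packing_chromatic_number {..n} (pendant_clique_edges n) = n"
    and "packing_chromatic_number {..n} (pendant_clique_edges n - {{n - 1, n}}) = n"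
proof -
  show "packing_chromatic_number {..n} (pendant_clique_edges n) = n"
  proof (rule packing_chromatic_number_eqI)
    show "packing_coloring {..n} (pendant_clique_edges n) n (pendant_clique_coloring n)"
      using assms by (rule packing_coloring_pendant_clique) simp
    fix K c assume "packing_coloring {..n} (pendant_clique_edges n) K c"
    then have "packing_coloring {..n} (pendant_clique_edges n - {{n - 1, n}}) K c"
      by (rule packing_coloring_antimono_edges) blast
    then show "n \<le> K" by (rule pendant_clique_colors_ge)
  qed
  show "packing_chromatic_number {..n} (pendant_clique_edges n - {{n - 1, n}}) = n"
  proof (rule packing_chromatic_number_eqI)
    show "packing_coloring {..n} (pendant_clique_edges n - {{n - 1, n}}) n
        (pendant_clique_coloring n)"
      using assms by (rule packing_coloring_pendant_clique) blast
  qed (rule pendant_clique_colors_ge)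
qed

theorem theorem2p2:
  fixes k n :: nat
  assumes "k \<ge> 3" and "k + 1 \<le> 2 * n" and "n \<le> k"
  shows "\<exists>(V :: nat set) (E :: nat set set) e.
           finite_simple_graph V E \<and> e \<in> E \<and>
           packing_chromatic_number V E = k \<and>
           packing_chromatic_number V (E - {e}) = n"
proof (cases "n = k")
  case True
  with assms have "2 \<le> n" by simp
  have "{n - 1, n} \<in> pendant_clique_edges n"
    by (simp add: pendant_clique_edges_def)
  with \<open>2 \<le> n\<close> True show ?thesis
    using finite_simple_graph_pendant_clique packing_chromatic_number_pendant_clique
    by (metis one_le_numeral order_trans)
next
  case False
  define p q where "p = n - 1" and "q = k - n"
  with assms False have "1 \<le> q" "q \<le> p" "p < n" and k: "k = p + q + 1" and n: "n = p + 1"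
    by auto
  have "bridge p q n \<in> bridged_edges p q n"
    using \<open>p < n\<close> by (intro bridge_in_bridged_edges) simp
  moreover have "packing_chromatic_number (bridged_vertices p q n) (bridged_edges p q n) = k"
    unfolding k by (rule packing_chromatic_number_bridged) fact+
  moreover have "packing_chromatic_number (bridged_vertices p q n)
      (bridged_edges p q n - {bridge p q n}) = p + 1"
    using \<open>q \<le> p\<close> \<open>p < n\<close> by (intro packing_chromatic_number_bridged_minus_bridge) simp_all
  ultimately show ?thesis
    using finite_simple_graph_bridged n by metis
qed

end
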